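(* Let $\pi_\varepsilon$ be the (unique) optimizer of the quadratically regularized optimal transport problem $$\mathrm{QOT}_\varepsilon(\mu,\nu)=\inf_{\pi\in\Pi(\mu,\nu)}\Big\{\int c\,d\pi+\frac{\varepsilon}{2}\Big\|\frac{d\pi}{dP}\Big\|_{L^2(P)}^2\Big\},\qquad c(x,y)=\tfrac12\|x-y\|^2,\ P=\mu\otimes\nu,$$ and let the following assumptions hold: (i) there is a bounded connected open Lipschitz domain $\Omega\subset B(0,1)\subset\mathbb{R}^d$ with $\mu(dx)=\rho_\mu(x)\mathbf 1_\Omega(x)\,dx$ and $0<\underline\lambda_\mu\le\rho_\mu\le\overline\lambda_\mu<\infty$ a.e. on $\Omega$; (ii) $\nu\ll\mathrm{Leb}$, $\mathrm{spt}\,\nu\subseteq B(0,1)$, and $d\nu/dy\le\overline\lambda_\nu<\infty$ on $\mathrm{spt}\,\nu$; (iii) the Monge (Brenier) map $T=\nabla\varphi$ from $\mu$ to $\nu$ is $L$-Lipschitz. Set $$C_0:=\overline\lambda_\nu(1+L^2)^{d/2}\omega_d,\qquad C_{\mathrm{lin}}:=\int c\,dP-\mathrm{OT}(\mu,\nu)+\frac12,$$ where $\omega_d=\pi^{d/2}/\Gamma(\frac d2+1)$ is the volume of the unit ball and $\mathrm{OT}(\mu,\nu)=\inf_{\pi\in\Pi(\mu,\nu)}\int c\,d\pi$. Let $C_{\mathrm{val}}\ge 1$ be a constant such that the value gap $\Delta_\varepsilon:=\mathrm{QOT}_\varepsilon(\mu,\nu)-\mathrm{OT}(\mu,\nu)$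 satisfies $C_{\mathrm{val}}^{-1}\varepsilon^{\frac{2}{2+d}}\le\Delta_\varepsilon\le C_{\mathrm{val}}\varepsilon^{\frac{2}{2+d}}$ for all $\varepsilon\in(0,1]$ (such a constant exists by the convergence rates of Eckstein–Nutz for compactly supported marginals). Then, with $$c_{\mathrm{sm}}=\Big(\frac1{2C_0C_{\mathrm{val}}}\Big)^{1/d},\qquad c_{\mathrm{lg}}=\Big(\frac1{2C_0C_{\mathrm{lin}}}\Big)^{1/d}>0,$$ for all $\varepsilon>0$, $$\mathrm{dist}\bigl(\mathrm{spt}\,\pi_\varepsilon;\mathrm{gr}\,T\bigr)\ge\begin{cases}c_{\mathrm{sm}}\varepsilon^{\frac{1}{2+d}},&\varepsilon\in(0,1],\\ c_{\mathrm{lg}},&\varepsilon\ge1,\end{cases}$$ where $\mathrm{gr}\,T=\{(x,T(x)):x\in\mathbb{R}^d\}$ and $\mathrm{dist}(A;B)=\sup_{a\in A}\inf_{b\in B}\|a-b\|$ is the directed Hausdorff distance in $\mathbb{R}^d\times\mathbb{R}^d$. In particular, $\mathrm{dist}(\mathrm{spt}\,\pi_\varepsilon;\mathrm{gr}\,T)\ge\min\{c_{\mathrm{sm}}\varepsilon^{\frac{1}{2+d}},c_{\mathrm{lg}}\}$ for all $\varepsilon>0$.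
   Context: Quadratically regularized optimal transport with quadratic cost $c(x,y)=\frac12\|x-y\|^2$ between compactly supported probability measures $\mu,\nu$ on $\mathbb{R}^d$ (supports in the unit ball), with reference measure $P=\mu\otimes\nu$ and optimizer $\pi_\varepsilon\ll P$. $\Pi(\mu,\nu)$ is the set of couplings of $\mu$ and $\nu$. The constants $c_{\mathrm{sm}},c_{\mathrm{lg}}$ depend only on $d$, $L$, $\overline\lambda_\nu$, $C_{\mathrm{val}}$ (and $C_{\mathrm{lin}}$). *)

theory Defs
  imports "HOL-Probability.Probability"
begin

definition qcost :: "'a::euclidean_space \<times> 'a \<Rightarrow> real" where
  "qcost z = (norm (fst z - snd z))\<^sup>2 / 2"

definition measure_support :: "'b::topological_space measure \<Rightarrow> 'b set" where
  "measure_support M = {x. \<forall>U. open U \<longrightarrow> x \<in> U \<longrightarrow> 0 < emeasure M U}"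

definition couplings :: "'a::euclidean_space measure \<Rightarrow> 'a measure \<Rightarrow> ('a \<times> 'a) measure set" where
  "couplings \<mu> \<nu> = {\<pi>. prob_space \<pi> \<and> sets \<pi> = sets borel \<and>
      distr \<pi> borel fst = \<mu> \<and> distr \<pi> borel snd = \<nu>}"

definition transport_cost :: "('a::euclidean_space \<times> 'a) measure \<Rightarrow> ennreal" where
  "transport_cost \<pi> = (\<integral>\<^sup>+ z. ennreal (qcost z) \<partial>\<pi>)"

definition qot_objective :: "real \<Rightarrow> 'a::euclidean_space measure \<Rightarrow> 'a measure \<Rightarrow> ('a \<times> 'a) measure \<Rightarrow> ennreal" where
  "qot_objective \<epsilon> \<mu> \<nu> \<pi> =
     (if absolutely_continuous (\<mu> \<Otimes>\<^sub>M \<nu>) \<pi>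
      then transport_cost \<pi> + ennreal (\<epsilon> / 2) *
             (\<integral>\<^sup>+ z. (RN_deriv (\<mu> \<Otimes>\<^sub>M \<nu>) \<pi> z)\<^sup>2 \<partial>(\<mu> \<Otimes>\<^sub>M \<nu>))
      else \<infinity>)"

text \<open>OT and QOT values (finite under the standing assumptions, as the cost is bounded on the supports).\<close>
definition OT_value :: "'a::euclidean_space measure \<Rightarrow> 'a measure \<Rightarrow> real" where
  "OT_value \<mu> \<nu> = enn2real (INF \<pi>\<in>couplings \<mu> \<nu>. transport_cost \<pi>)"

definition QOT_value :: "real \<Rightarrow> 'a::euclidean_space measure \<Rightarrow> 'a measure \<Rightarrow> real" where
  "QOT_value \<epsilon> \<mu> \<nu> = enn2real (INF \<pi>\<in>couplings \<mu> \<nu>. qot_objective \<epsilon> \<mu> \<nu> \<pi>)"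

definition qot_optimizer :: "real \<Rightarrow> 'a::euclidean_space measure \<Rightarrow> 'a measure \<Rightarrow> ('a \<times> 'a) measure \<Rightarrow> bool" where
  "qot_optimizer \<epsilon> \<mu> \<nu> \<pi> \<longleftrightarrow> \<pi> \<in> couplings \<mu> \<nu> \<and>
     qot_objective \<epsilon> \<mu> \<nu> \<pi> = (INF p\<in>couplings \<mu> \<nu>. qot_objective \<epsilon> \<mu> \<nu> p)"

text \<open>Lipschitz domain: open set whose boundary is locally (after a rotation, encoded by a unit
  direction e) the strict epigraph of a Lipschitz function on the hyperplane orthogonal to e.\<close>
definition lipschitz_domain :: "'a::euclidean_space set \<Rightarrow> bool" where
  "lipschitz_domain \<Omega> \<longleftrightarrow> open \<Omega> \<and>
     (\<forall>x\<in>frontier \<Omega>. \<exists>r>0. \<exists>e. norm e = 1 \<and> (\<exists>g K. K-lipschitz_on {z. z \<bullet> e = 0} g \<and>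
        \<Omega> \<inter> ball x r = {y \<in> ball x r. g (y - (y \<bullet> e) *\<^sub>R e) < y \<bullet> e}))"

definition graph_of :: "('a \<Rightarrow> 'a) \<Rightarrow> ('a \<times> 'a) set" where
  "graph_of T = {(x, T x) | x. True}"

definition directed_hausdorff :: "'b::metric_space set \<Rightarrow> 'b set \<Rightarrow> ereal" where
  "directed_hausdorff A B = (SUP a\<in>A. ereal (infdist a B))"

definition unit_ball_volume :: "nat \<Rightarrow> real" where
  "unit_ball_volume d = pi powr (real d / 2) / Gamma (real d / 2 + 1)"

end

theory Submission
  imports Defs
begin

text \<open>Write \<open>P = \<mu> \<otimes> \<nu>\<close> and \<open>h = d\<pi>\<^sub>\<epsilon>/dP\<close>. If the support of \<open>\<pi>\<^sub>\<epsilon>\<close> lies in the closed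
  \<open>r\<close>-neighbourhood \<open>S\<^sub>r\<close> of the graph of \<open>T\<close>, Cauchy-Schwarz against the indicator of
  \<open>S\<^sub>r\<close> gives \<open>1 = \<pi>\<^sub>\<epsilon>(S\<^sub>r) \<le> P(S\<^sub>r) \<parallel>h\<parallel>\<^sup>2\<close>. As \<open>T\<close> is \<open>L\<close>-Lipschitz, every slice
  \<open>{y. (x, y) \<in> S\<^sub>r}\<close> lies in the ball of radius \<open>sqrt (1 + L\<^sup>2) r\<close> around \<open>T x\<close>, so the density
  bound on \<open>\<nu>\<close> yields \<open>P(S\<^sub>r) \<le> C\<^sub>0 r\<^sup>d\<close>. On the other hand \<open>(\<epsilon>/2) \<parallel>h\<parallel>\<^sup>2 \<le> QOT\<^sub>\<epsilon> - OT\<close>,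
  which is at most \<open>C\<^sub>v\<^sub>a\<^sub>l \<epsilon>\<^bsup>2/(2+d)\<^esup>\<close> for \<open>\<epsilon> \<le> 1\<close> and, by comparison with the
  independent coupling \<open>P\<close>, at most \<open>C\<^sub>l\<^sub>i\<^sub>n - 1/2 + \<epsilon>/2\<close>. Solving
  \<open>1 \<le> C\<^sub>0 r\<^sup>d \<parallel>h\<parallel>\<^sup>2\<close> for \<open>r\<close> gives both bounds.

  Only the upper density bound of \<open>\<nu>\<close>, the Lipschitz bound on \<open>T\<close>, the supports in the unit
  ball and the upper value bound enter; the regularity of \<open>\<Omega>\<close>, the lower density bound of \<open>\<mu>\<close>,
  the Brenier property of \<open>T\<close> and the lower value bound are not needed.\<close>

section \<open>Supports, densities and products of Borel measures\<close>

lemma measure_support_compl_eq_Union: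
  "- measure_support M = \<Union>{U. open U \<and> emeasure M U = 0}"
  unfolding measure_support_def by (auto simp: not_less)

lemma closed_measure_support: "closed (measure_support M)"
  unfolding closed_def measure_support_compl_eq_Union by auto

lemma emeasure_compl_measure_support:
  fixes M :: "'b::second_countable_topology measure"
  assumes "sets M = sets borel"
  shows "emeasure M (- measure_support M) = 0"
proof -
  obtain F where F: "F \<subseteq> {U. open U \<and> emeasure M U = 0}" "countable F"
    "\<Union>F = \<Union>{U. open U \<and> emeasure M U = 0}"
    using Lindelof[of "{U. open U \<and> emeasure M U = 0}"] by blast
  have "(\<Union>U\<in>F. U) \<in> null_sets M"
    using F(1,2) assms by (intro null_sets_UN') (auto simp: null_sets_def)
  then show ?thesis
    using F(3) measure_support_compl_eq_Union[of M] by auto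
qed

lemma AE_in_measure_support:
  fixes M :: "'b::second_countable_topology measure"
  assumes "sets M = sets borel"
  shows "AE x in M. x \<in> measure_support M"
  using emeasure_compl_measure_support[OF assms] closed_measure_support[of M]
  by (intro AE_I[of _ _ "- measure_support M"]) (auto simp: assms)

lemma measure_support_nonempty:
  fixes M :: "'b::second_countable_topology measure"
  assumes "prob_space M" and "sets M = sets borel"
  shows "measure_support M \<noteq> {}"
  using AE_in_measure_support[OF assms(2)] prob_space.AE_False[OF assms(1)] by auto

lemma emeasure_le_lborel_if_density_bounded_on_support:
  fixes \<nu> :: "'a::euclidean_space measure"
  assumes "sets \<nu> = sets borel" and f: "f \<in> borel_measurable lborel" "\<nu> = density lborel f"
    and f_le: "\<forall>y\<in>measure_support \<nu>. f y \<le> ennreal c" and B: "B \<in> sets borel"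
  shows "emeasure \<nu> B \<le> ennreal c * emeasure lborel B"
proof -
  let ?S = "measure_support \<nu>"
  have "?S \<in> sets borel"
    by (simp add: borel_closed closed_measure_support)
  have "emeasure \<nu> B = emeasure \<nu> (B \<inter> ?S)"
    using AE_in_measure_support[OF assms(1)] B \<open>?S \<in> sets borel\<close> assms(1)
    by (intro emeasure_eq_AE) auto
  also have "\<dots> = (\<integral>\<^sup>+ y. f y * indicator (B \<inter> ?S) y \<partial>lborel)"
    using B \<open>?S \<in> sets borel\<close> f by (simp add: emeasure_density)
  also have "\<dots> \<le> (\<integral>\<^sup>+ y. ennreal c * indicator B y \<partial>lborel)"
    using f_le by (intro nn_integral_mono) (auto split: split_indicator)
  also have "\<dots> = ennreal c * emeasure lborel B"
    using B by (simp add: nn_integral_cmult_indicator)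
  finally show ?thesis .
qed

lemma density_bound_pos:
  fixes \<nu> :: "'a::euclidean_space measure"
  assumes "prob_space \<nu>" "sets \<nu> = sets borel"
    and \<nu>_le: "\<And>B. B \<in> sets borel \<Longrightarrow> emeasure \<nu> B \<le> ennreal c * emeasure lborel B"
  shows "0 < c"
proof (rule ccontr)
  assume "\<not> 0 < c"
  then have "emeasure \<nu> UNIV = 0"
    using \<nu>_le[of UNIV] by (simp add: ennreal_neg)
  then show False
    using prob_space.emeasure_space_1[OF assms(1)] sets_eq_imp_space_eq[OF assms(2)] by simp
qed

lemma AE_density_indicator:
  assumes "f \<in> borel_measurable lborel" "\<Omega> \<in> sets borel"
  shows "AE x in density lborel (\<lambda>x. f x * indicator \<Omega> x). x \<in> \<Omega>"
  using assms by (subst AE_density) (auto split: split_indicator)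

lemma sets_pair_measure_borel:
  assumes "sets \<mu> = sets (borel :: 'a::second_countable_topology measure)"
    and "sets \<nu> = sets (borel :: 'b::second_countable_topology measure)"
  shows "sets (\<mu> \<Otimes>\<^sub>M \<nu>) = sets borel"
  using sets_pair_measure_cong[OF assms] borel_prod by metis

section \<open>Neighbourhoods of Lipschitz graphs\<close>

lemma norm_sub_le_infdist_graph:
  fixes T :: "'a::real_normed_vector \<Rightarrow> 'a"
  assumes T: "L-lipschitz_on UNIV T"
  shows "norm (y - T x) \<le> sqrt (1 + L\<^sup>2) * infdist (x, y) (graph_of T)"
proof -
  have dist_bound: "norm (y - T x) \<le> sqrt (1 + L\<^sup>2) * dist (x, y) (x', T x')" for x'
  proof -
    have "norm (y - T x) \<le> norm (y - T x') + L * dist x x'"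
      using norm_triangle_ineq[of "y - T x'" "T x' - T x"] lipschitz_onD[OF T, of x' x]
      by (simp add: dist_norm norm_minus_commute)
    also have "\<dots> \<le> sqrt (1 + L\<^sup>2) * sqrt ((dist x x')\<^sup>2 + (dist y (T x'))\<^sup>2)"
      unfolding real_sqrt_mult[symmetric]
      by (rule real_le_rsqrt)
        (use sum_squares_ge_zero[of "L * norm (y - T x') - dist x x'" 0] in
          \<open>simp add: dist_norm power2_eq_square algebra_simps\<close>)
    finally show ?thesis
      by (simp add: dist_Pair_Pair)
  qed
  have "graph_of T \<noteq> {}"
    by (auto simp: graph_of_def)
  have "0 < sqrt (1 + L\<^sup>2)"
    by (simp add: add_pos_nonneg)
  then have "norm (y - T x) / sqrt (1 + L\<^sup>2) \<le> infdist (x, y) (graph_of T)"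
    unfolding infdist_notempty[OF \<open>graph_of T \<noteq> {}\<close>] using dist_bound
    by (intro cINF_greatest) (auto simp: graph_of_def pos_divide_le_eq[OF \<open>0 < sqrt (1 + L\<^sup>2)\<close>] mult.commute)
  then show ?thesis
    by (simp add: pos_divide_le_eq[OF \<open>0 < sqrt (1 + L\<^sup>2)\<close>] mult.commute)
qed

lemma Pair_vimage_graph_neighbourhood_subset_cball:
  fixes T :: "'a::real_normed_vector \<Rightarrow> 'a"
  assumes T: "L-lipschitz_on UNIV T" and r: "0 \<le> r"
  shows "Pair x -` {z. infdist z (graph_of T) \<le> r} \<subseteq> cball (T x) (sqrt (1 + L\<^sup>2) * r)"
proof
  fix y assume "y \<in> Pair x -` {z. infdist z (graph_of T) \<le> r}"
  then have "sqrt (1 + L\<^sup>2) * infdist (x, y) (graph_of T) \<le> sqrt (1 + L\<^sup>2) * r"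
    by (simp add: mult_left_mono)
  then show "y \<in> cball (T x) (sqrt (1 + L\<^sup>2) * r)"
    using norm_sub_le_infdist_graph[OF T, of y x] by (simp add: dist_norm norm_minus_commute)
qed

lemma real_sqrt_power_eq_powr:
  assumes "0 < x"
  shows "sqrt x ^ n = x powr (real n / 2)"
proof -
  have "sqrt x ^ n = sqrt x powr n"
    using assms by (simp add: powr_realpow)
  also have "\<dots> = x powr (n / 2)"
    using assms by (simp add: powr_half_sqrt[symmetric] powr_powr)
  finally show ?thesis .
qed

lemma unit_ball_volume_eq: "unit_ball_volume n = unit_ball_vol (real n)"
  by (simp add: unit_ball_volume_def unit_ball_vol_def)

lemma emeasure_graph_neighbourhood_le:
  fixes \<mu> \<nu> :: "'a::euclidean_space measure" and T :: "'a \<Rightarrow> 'a"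
  assumes "prob_space \<mu>" "sets \<mu> = sets borel" "prob_space \<nu>" "sets \<nu> = sets borel"
    and \<nu>_le: "\<And>B. B \<in> sets borel \<Longrightarrow> emeasure \<nu> B \<le> ennreal c * emeasure lborel B"
    and T: "L-lipschitz_on UNIV T" and r: "0 \<le> r"
  shows "emeasure (\<mu> \<Otimes>\<^sub>M \<nu>) {z. infdist z (graph_of T) \<le> r}
     \<le> ennreal (c * (1 + L\<^sup>2) powr (DIM('a) / 2) * unit_ball_volume DIM('a) * r ^ DIM('a))"
proof -
  interpret \<mu>: prob_space \<mu> by fact
  interpret \<nu>: prob_space \<nu> by fact
  let ?S = "{z. infdist z (graph_of T) \<le> r}"
  let ?R = "sqrt (1 + L\<^sup>2) * r"
  have "?S \<in> sets (\<mu> \<Otimes>\<^sub>M \<nu>)"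
    using sets_pair_measure_borel[OF assms(2,4)]
    by (simp add: borel_closed closed_Collect_le continuous_intros)
  then have "emeasure (\<mu> \<Otimes>\<^sub>M \<nu>) ?S = (\<integral>\<^sup>+x. emeasure \<nu> (Pair x -` ?S) \<partial>\<mu>)"
    by (rule \<nu>.emeasure_pair_measure_alt)
  also have "\<dots> \<le> (\<integral>\<^sup>+x. ennreal c * emeasure lborel (cball (T x) ?R) \<partial>\<mu>)"
  proof (intro nn_integral_mono)
    fix x
    have "emeasure \<nu> (Pair x -` ?S) \<le> emeasure \<nu> (cball (T x) ?R)"
      using Pair_vimage_graph_neighbourhood_subset_cball[OF T r] assms(4) by (intro emeasure_mono) auto
    also have "\<dots> \<le> ennreal c * emeasure lborel (cball (T x) ?R)"
      by (intro \<nu>_le) auto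
    finally show "emeasure \<nu> (Pair x -` ?S) \<le> ennreal c * emeasure lborel (cball (T x) ?R)" .
  qed
  also have "\<dots> = ennreal c * ennreal (unit_ball_vol DIM('a) * ?R ^ DIM('a))"
    using r by (simp add: emeasure_cball \<mu>.emeasure_space_1)
  also have "\<dots> \<le> ennreal (c * (1 + L\<^sup>2) powr (DIM('a) / 2) * unit_ball_volume DIM('a) * r ^ DIM('a))"
  proof (cases "0 \<le> c")
    case True
    then show ?thesis
      using r real_sqrt_power_eq_powr[of "1 + L\<^sup>2" "DIM('a)"]
      by (simp add: ennreal_mult[symmetric] unit_ball_volume_eq power_mult_distrib mult_ac add_pos_nonneg)
  qed (simp add: ennreal_neg)
  finally show ?thesis .
qed

section \<open>Spread of a measure with square-integrable density\<close>

lemma ereal_le_directed_hausdorffI: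
  assumes "A \<noteq> {}" and "\<And>r. 0 \<le> r \<Longrightarrow> \<forall>a\<in>A. infdist a B \<le> r \<Longrightarrow> c \<le> r"
  shows "ereal c \<le> directed_hausdorff A B"
proof -
  have le_hausdorff: "ereal (infdist a B) \<le> directed_hausdorff A B" if "a \<in> A" for a
    unfolding directed_hausdorff_def using that by (rule SUP_upper)
  moreover obtain a where "a \<in> A"
    using assms(1) by blast
  ultimately have "0 \<le> directed_hausdorff A B"
    by (metis ereal_less_eq(3) infdist_nonneg order_trans zero_ereal_def)
  then consider "directed_hausdorff A B = \<infinity>" | r where "directed_hausdorff A B = ereal r" "0 \<le> r"
    by (cases "directed_hausdorff A B") auto
  then show ?thesis
  proof cases
    case (2 r)
    then show ?thesis
      using assms(2)[of r] le_hausdorff by auto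
  qed simp
qed

lemma one_le_emeasure_mul_nn_integral_square:
  fixes P :: "'b::second_countable_topology measure"
  assumes h: "h \<in> borel_measurable P" and "prob_space (density P h)" and "sets P = sets borel"
    and S: "S \<in> sets P" "measure_support (density P h) \<subseteq> S"
  shows "1 \<le> emeasure P S * (\<integral>\<^sup>+ z. (h z)\<^sup>2 \<partial>P)"
proof -
  have "AE z in density P h. z \<in> S"
    using AE_in_measure_support[of "density P h"] assms(3) S(2) by auto
  then have "emeasure (density P h) S = 1"
    using S(1) by (simp add: prob_space.emeasure_eq_1_AE[OF assms(2)])
  then have "1 = (\<integral>\<^sup>+ z. h z * indicator S z \<partial>P)"
    using h S(1) by (simp add: emeasure_density)
  then have "1 \<le> (\<integral>\<^sup>+ z. h z * indicator S z \<partial>P)\<^sup>2"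
    by simp
  also have "\<dots> \<le> (\<integral>\<^sup>+ z. (h z)\<^sup>2 \<partial>P) * (\<integral>\<^sup>+ z. (indicator S z)\<^sup>2 \<partial>P)"
    using h S(1) by (intro Cauchy_Schwarz_nn_integral) auto
  also have "(\<integral>\<^sup>+ z. (indicator S z)\<^sup>2 \<partial>P) = emeasure P S"
    using S(1) by (simp add: power2_eq_square flip: indicator_inter_arith)
  finally show ?thesis
    by (simp add: mult.commute)
qed

lemma powr_inverse_le_if_one_le_mult_power:
  fixes K r :: real
  assumes n: "0 < n" and r: "0 \<le> r" and le: "1 \<le> K * r ^ n"
  shows "(1 / K) powr (1 / n) \<le> r"
proof -
  have "0 < r"
    using le r n by (cases "r = 0") (auto simp: zero_power)
  then have "0 < K"
    using le mult_nonpos_nonneg[of K "r ^ n"] by (cases "K \<le> 0") auto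
  then have "1 / K \<le> r powr n"
    using le \<open>0 < r\<close> by (simp add: powr_realpow divide_le_eq mult.commute)
  then have "(1 / K) powr (1 / n) \<le> (r powr n) powr (1 / n)"
    using \<open>0 < K\<close> by (intro powr_mono2) auto
  also have "\<dots> = r"
    using n r by (simp add: powr_powr)
  finally show ?thesis .
qed

lemma directed_hausdorff_support_density_ge:
  fixes P :: "'b::{metric_space, second_countable_topology} measure"
  assumes h: "h \<in> borel_measurable P" and prob: "prob_space (density P h)"
    and sets: "sets P = sets borel" and n: "0 < n" and E: "0 \<le> E"
    and nbhd: "\<And>r. 0 \<le> r \<Longrightarrow> emeasure P {z. infdist z G \<le> r} \<le> ennreal (C * r ^ n)"
    and energy: "(\<integral>\<^sup>+ z. (h z)\<^sup>2 \<partial>P) \<le> ennreal E"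
  shows "ereal ((1 / (C * E)) powr (1 / n)) \<le> directed_hausdorff (measure_support (density P h)) G"
proof (rule ereal_le_directed_hausdorffI)
  show "measure_support (density P h) \<noteq> {}"
    using measure_support_nonempty[OF prob] sets by simp
  fix r :: real
  assume r: "0 \<le> r" and "\<forall>z\<in>measure_support (density P h). infdist z G \<le> r"
  then have spt: "measure_support (density P h) \<subseteq> {z. infdist z G \<le> r}"
    by auto
  have "{z. infdist z G \<le> r} \<in> sets P"
    using sets by (simp add: borel_closed closed_Collect_le continuous_intros)
  then have "1 \<le> emeasure P {z. infdist z G \<le> r} * (\<integral>\<^sup>+ z. (h z)\<^sup>2 \<partial>P)"
    by (rule one_le_emeasure_mul_nn_integral_square[OF h prob sets _ spt])
  also have "\<dots> \<le> ennreal (C * r ^ n) * ennreal E"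
    by (intro mult_mono nbhd r energy) auto
  also have "\<dots> = ennreal ((C * E) * r ^ n)"
    using ennreal_mult''[OF E, of "C * r ^ n"] by (simp add: mult_ac)
  finally have "1 \<le> (C * E) * r ^ n"
    by simp
  then show "(1 / (C * E)) powr (1 / n) \<le> r"
    by (rule powr_inverse_le_if_one_le_mult_power[OF n r])
qed

section \<open>The regularized transport problem\<close>

lemma pair_measure_in_couplings:
  fixes \<mu> \<nu> :: "'a::euclidean_space measure"
  assumes \<mu>: "prob_space \<mu>" "sets \<mu> = sets borel" and \<nu>: "prob_space \<nu>" "sets \<nu> = sets borel"
  shows "\<mu> \<Otimes>\<^sub>M \<nu> \<in> couplings \<mu> \<nu>"
proof -
  interpret pair_sigma_finite \<nu> \<mu>
    using \<mu> \<nu> by (simp add: pair_sigma_finite_def prob_space_imp_sigma_finite)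
  have "distr (\<mu> \<Otimes>\<^sub>M \<nu>) borel fst = distr (\<mu> \<Otimes>\<^sub>M \<nu>) \<mu> fst"
    using \<mu>(2) by (intro distr_cong) auto
  also have "\<dots> = \<mu>"
    by (rule prob_space.distr_pair_fst[OF \<nu>(1)])
  finally have fst: "distr (\<mu> \<Otimes>\<^sub>M \<nu>) borel fst = \<mu>" .
  have "distr (\<mu> \<Otimes>\<^sub>M \<nu>) borel snd = distr (distr (\<mu> \<Otimes>\<^sub>M \<nu>) (\<nu> \<Otimes>\<^sub>M \<mu>) (\<lambda>(x, y). (y, x))) \<nu> fst"
    using \<nu>(2) by (subst distr_distr) (auto intro!: distr_cong simp: comp_def case_prod_beta)
  also have "\<dots> = distr (\<nu> \<Otimes>\<^sub>M \<mu>) \<nu> fst"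
    by (simp flip: distr_pair_swap)
  also have "\<dots> = \<nu>"
    by (rule prob_space.distr_pair_fst[OF \<mu>(1)])
  finally have snd: "distr (\<mu> \<Otimes>\<^sub>M \<nu>) borel snd = \<nu>" .
  show ?thesis
    unfolding couplings_def using prob_space_pair[OF \<mu>(1) \<nu>(1)] sets_pair_measure_borel[OF \<mu>(2) \<nu>(2)] fst snd
    by simp
qed

lemma borel_measurable_qcost: "qcost \<in> borel_measurable borel"
  unfolding qcost_def by (intro borel_measurable_continuous_onI continuous_intros) auto

lemma transport_cost_pair_measure_le:
  fixes \<mu> \<nu> :: "'a::euclidean_space measure"
  assumes \<mu>: "prob_space \<mu>" "AE x in \<mu>. norm x \<le> R" and \<nu>: "prob_space \<nu>" "AE y in \<nu>. norm y \<le> R"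
    and sets: "sets \<mu> = sets borel" "sets \<nu> = sets borel"
  shows "transport_cost (\<mu> \<Otimes>\<^sub>M \<nu>) \<le> ennreal (2 * R\<^sup>2)"
proof -
  interpret pair_prob_space \<mu> \<nu>
    using \<mu> \<nu> by (simp add: pair_prob_space_def pair_sigma_finite_def prob_space_imp_sigma_finite)
  have qcost_le: "qcost (x, y) \<le> 2 * R\<^sup>2" if "norm x \<le> R" "norm y \<le> R" for x y :: 'a
  proof -
    have "norm (x - y) \<le> 2 * R"
      using norm_triangle_ineq4[of x y] that by simp
    then have "(norm (x - y))\<^sup>2 \<le> (2 * R)\<^sup>2"
      by (intro power_mono) auto
    then show ?thesis
      by (simp add: qcost_def power_mult_distrib)
  qed
  have "qcost \<in> borel_measurable (\<mu> \<Otimes>\<^sub>M \<nu>)"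
    using borel_measurable_qcost measurable_cong_sets[OF sets_pair_measure_borel[OF sets] refl] by blast
  moreover have "AE x in \<mu>. AE y in \<nu>. qcost (x, y) \<le> 2 * R\<^sup>2"
    using \<mu>(2)
  proof eventually_elim
    case (elim x)
    show ?case
      using \<nu>(2) by eventually_elim (simp add: elim qcost_le)
  qed
  ultimately have "AE z in \<mu> \<Otimes>\<^sub>M \<nu>. qcost z \<le> 2 * R\<^sup>2"
    by (intro AE_pair_measure) auto
  then have "transport_cost (\<mu> \<Otimes>\<^sub>M \<nu>) \<le> (\<integral>\<^sup>+ z. ennreal (2 * R\<^sup>2) \<partial>(\<mu> \<Otimes>\<^sub>M \<nu>))"
    unfolding transport_cost_def by (intro nn_integral_mono_AE) (auto elim!: AE_mp)
  also have "\<dots> = ennreal (2 * R\<^sup>2)"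
    by (simp add: P.emeasure_space_1)
  finally show ?thesis .
qed

lemma integral_qcost_eq_transport_cost:
  fixes M :: "('a::euclidean_space \<times> 'a) measure"
  assumes "sets M = sets borel"
  shows "(\<integral>z. qcost z \<partial>M) = enn2real (transport_cost M)"
  unfolding transport_cost_def
proof (rule integral_eq_nn_integral)
  show "qcost \<in> borel_measurable M"
    using borel_measurable_qcost measurable_cong_sets[OF assms refl] by blast
qed (simp add: qcost_def)

lemma OT_value_le_transport_cost:
  assumes "\<pi> \<in> couplings \<mu> \<nu>" and "transport_cost \<pi> < \<top>"
  shows "OT_value \<mu> \<nu> \<le> enn2real (transport_cost \<pi>)"
  unfolding OT_value_def using assms by (intro enn2real_mono INF_lower)

lemma OT_value_le_integral_qcost_pair_measure:
  fixes \<mu> \<nu> :: "'a::euclidean_space measure"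
  assumes "prob_space \<mu>" "sets \<mu> = sets borel" "prob_space \<nu>" "sets \<nu> = sets borel"
    and "transport_cost (\<mu> \<Otimes>\<^sub>M \<nu>) < \<top>"
  shows "OT_value \<mu> \<nu> \<le> (\<integral>z. qcost z \<partial>(\<mu> \<Otimes>\<^sub>M \<nu>))"
  unfolding integral_qcost_eq_transport_cost[OF sets_pair_measure_borel[OF assms(2,4)]]
  using assms by (intro OT_value_le_transport_cost pair_measure_in_couplings)

lemma qot_objective_pair_measure:
  assumes "prob_space (\<mu> \<Otimes>\<^sub>M \<nu>)"
  shows "qot_objective \<epsilon> \<mu> \<nu> (\<mu> \<Otimes>\<^sub>M \<nu>) = transport_cost (\<mu> \<Otimes>\<^sub>M \<nu>) + ennreal (\<epsilon> / 2)"
proof -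
  interpret P: prob_space "\<mu> \<Otimes>\<^sub>M \<nu>" by fact
  have "AE z in \<mu> \<Otimes>\<^sub>M \<nu>. 1 = RN_deriv (\<mu> \<Otimes>\<^sub>M \<nu>) (\<mu> \<Otimes>\<^sub>M \<nu>) z"
    by (rule P.RN_deriv_unique) (auto simp: density_1)
  then have "(\<integral>\<^sup>+ z. (RN_deriv (\<mu> \<Otimes>\<^sub>M \<nu>) (\<mu> \<Otimes>\<^sub>M \<nu>) z)\<^sup>2 \<partial>(\<mu> \<Otimes>\<^sub>M \<nu>)) = 1"
    by (subst nn_integral_cong_AE[where v = "\<lambda>_. 1"]) (auto elim: AE_mp simp: P.emeasure_space_1)
  then show ?thesis
    unfolding qot_objective_def absolutely_continuous_def by simp
qed

lemma QOT_value_le_pair_measure: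
  fixes \<mu> \<nu> :: "'a::euclidean_space measure"
  assumes "prob_space \<mu>" "sets \<mu> = sets borel" "prob_space \<nu>" "sets \<nu> = sets borel"
    and "transport_cost (\<mu> \<Otimes>\<^sub>M \<nu>) < \<top>" and "0 \<le> \<epsilon>"
  shows "QOT_value \<epsilon> \<mu> \<nu> \<le> enn2real (transport_cost (\<mu> \<Otimes>\<^sub>M \<nu>)) + \<epsilon> / 2"
proof -
  have "QOT_value \<epsilon> \<mu> \<nu> \<le> enn2real (qot_objective \<epsilon> \<mu> \<nu> (\<mu> \<Otimes>\<^sub>M \<nu>))"
    unfolding QOT_value_def using assms(5)
    by (intro enn2real_mono INF_lower pair_measure_in_couplings assms(1-4))
      (simp add: qot_objective_pair_measure[OF prob_space_pair[OF assms(1,3)]])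
  also have "\<dots> = enn2real (transport_cost (\<mu> \<Otimes>\<^sub>M \<nu>)) + \<epsilon> / 2"
    using assms(5,6) by (simp add: qot_objective_pair_measure[OF prob_space_pair[OF assms(1,3)]] enn2real_plus)
  finally show ?thesis .
qed

lemma qot_optimizer_objective_finite:
  fixes \<mu> \<nu> :: "'a::euclidean_space measure"
  assumes \<mu>: "prob_space \<mu>" "sets \<mu> = sets borel" and \<nu>: "prob_space \<nu>" "sets \<nu> = sets borel"
    and cost: "transport_cost (\<mu> \<Otimes>\<^sub>M \<nu>) < \<top>" and opt: "qot_optimizer \<epsilon> \<mu> \<nu> \<pi>"
  shows "qot_objective \<epsilon> \<mu> \<nu> \<pi> < \<top>"
proof -
  have "qot_objective \<epsilon> \<mu> \<nu> \<pi> \<le> qot_objective \<epsilon> \<mu> \<nu> (\<mu> \<Otimes>\<^sub>M \<nu>)"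
    using opt unfolding qot_optimizer_def by (auto intro!: INF_lower pair_measure_in_couplings \<mu> \<nu>)
  also have "\<dots> < \<top>"
    using cost by (simp add: qot_objective_pair_measure[OF prob_space_pair[OF \<mu>(1) \<nu>(1)]])
  finally show ?thesis .
qed

lemma qot_optimizer_energy_le:
  fixes \<mu> \<nu> :: "'a::euclidean_space measure"
  assumes \<mu>: "prob_space \<mu>" "sets \<mu> = sets borel" and \<nu>: "prob_space \<nu>" "sets \<nu> = sets borel"
    and cost: "transport_cost (\<mu> \<Otimes>\<^sub>M \<nu>) < \<top>" and \<epsilon>: "0 < \<epsilon>"
    and opt: "qot_optimizer \<epsilon> \<mu> \<nu> \<pi>"
  shows "absolutely_continuous (\<mu> \<Otimes>\<^sub>M \<nu>) \<pi>"
    and "OT_value \<mu> \<nu> \<le> QOT_value \<epsilon> \<mu> \<nu>"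
    and "(\<integral>\<^sup>+ z. (RN_deriv (\<mu> \<Otimes>\<^sub>M \<nu>) \<pi> z)\<^sup>2 \<partial>(\<mu> \<Otimes>\<^sub>M \<nu>))
           \<le> ennreal (2 / \<epsilon> * (QOT_value \<epsilon> \<mu> \<nu> - OT_value \<mu> \<nu>))"
proof -
  define A where "A = (\<integral>\<^sup>+ z. (RN_deriv (\<mu> \<Otimes>\<^sub>M \<nu>) \<pi> z)\<^sup>2 \<partial>(\<mu> \<Otimes>\<^sub>M \<nu>))"
  have \<pi>: "\<pi> \<in> couplings \<mu> \<nu>"
    and obj_\<pi>: "qot_objective \<epsilon> \<mu> \<nu> \<pi> = (INF p\<in>couplings \<mu> \<nu>. qot_objective \<epsilon> \<mu> \<nu> p)"
    using opt unfolding qot_optimizer_def by auto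
  have obj_finite: "qot_objective \<epsilon> \<mu> \<nu> \<pi> < \<top>"
    by (rule qot_optimizer_objective_finite[OF \<mu> \<nu> cost opt])
  then show "absolutely_continuous (\<mu> \<Otimes>\<^sub>M \<nu>) \<pi>"
    unfolding qot_objective_def by (auto split: if_splits)
  then have obj_eq: "qot_objective \<epsilon> \<mu> \<nu> \<pi> = transport_cost \<pi> + ennreal (\<epsilon> / 2) * A"
    unfolding qot_objective_def A_def by simp
  have cost_\<pi>: "transport_cost \<pi> < \<top>" and reg_\<pi>: "ennreal (\<epsilon> / 2) * A < \<top>"
    using obj_finite by (simp_all add: obj_eq)
  then have "A < \<top>"
    using \<epsilon> by (auto simp: ennreal_mult_less_top)
  have "QOT_value \<epsilon> \<mu> \<nu> = enn2real (transport_cost \<pi>) + \<epsilon> / 2 * enn2real A"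
    unfolding QOT_value_def obj_\<pi>[symmetric] obj_eq using \<epsilon> cost_\<pi> reg_\<pi>
    by (simp add: enn2real_plus enn2real_mult)
  moreover have "OT_value \<mu> \<nu> \<le> enn2real (transport_cost \<pi>)"
    by (rule OT_value_le_transport_cost[OF \<pi> cost_\<pi>])
  ultimately have gap: "\<epsilon> / 2 * enn2real A \<le> QOT_value \<epsilon> \<mu> \<nu> - OT_value \<mu> \<nu>"
    by simp
  then show "OT_value \<mu> \<nu> \<le> QOT_value \<epsilon> \<mu> \<nu>"
    using \<epsilon> mult_nonneg_nonneg[of "\<epsilon> / 2" "enn2real A", OF _ enn2real_nonneg] by linarith
  have "A = ennreal (enn2real A)"
    using \<open>A < \<top>\<close> by simp
  also have "\<dots> \<le> ennreal (2 / \<epsilon> * (QOT_value \<epsilon> \<mu> \<nu> - OT_value \<mu> \<nu>))"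
    using gap \<epsilon> by (intro ennreal_leI) (simp add: field_simps)
  finally show "A \<le> ennreal (2 / \<epsilon> * (QOT_value \<epsilon> \<mu> \<nu> - OT_value \<mu> \<nu>))" .
qed

lemma directed_hausdorff_qot_support_ge:
  fixes \<mu> \<nu> :: "'a::euclidean_space measure"
  assumes \<mu>: "prob_space \<mu>" "sets \<mu> = sets borel" and \<nu>: "prob_space \<nu>" "sets \<nu> = sets borel"
    and cost: "transport_cost (\<mu> \<Otimes>\<^sub>M \<nu>) < \<top>" and \<epsilon>: "0 < \<epsilon>" and opt: "qot_optimizer \<epsilon> \<mu> \<nu> \<pi>"
    and nbhd: "\<And>r. 0 \<le> r \<Longrightarrow> emeasure (\<mu> \<Otimes>\<^sub>M \<nu>) {z. infdist z G \<le> r} \<le> ennreal (C * r ^ DIM('a))"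
    and E: "2 / \<epsilon> * (QOT_value \<epsilon> \<mu> \<nu> - OT_value \<mu> \<nu>) \<le> E"
  shows "ereal ((1 / (C * E)) powr (1 / DIM('a))) \<le> directed_hausdorff (measure_support \<pi>) G"
proof -
  let ?P = "\<mu> \<Otimes>\<^sub>M \<nu>"
  interpret P: prob_space ?P
    by (rule prob_space_pair[OF \<mu>(1) \<nu>(1)])
  note energy = qot_optimizer_energy_le[OF \<mu> \<nu> cost \<epsilon> opt]
  have \<pi>: "prob_space \<pi>" "sets \<pi> = sets borel"
    using opt by (auto simp: qot_optimizer_def couplings_def)
  have density_eq: "density ?P (RN_deriv ?P \<pi>) = \<pi>"
    using P.density_RN_deriv[OF energy(1)] \<pi>(2) sets_pair_measure_borel[OF \<mu>(2) \<nu>(2)] by simp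
  have "0 \<le> 2 / \<epsilon> * (QOT_value \<epsilon> \<mu> \<nu> - OT_value \<mu> \<nu>)"
    using energy(2) \<epsilon> by simp
  then have "0 \<le> E"
    using E by linarith
  have "ereal ((1 / (C * E)) powr (1 / DIM('a)))
          \<le> directed_hausdorff (measure_support (density ?P (RN_deriv ?P \<pi>))) G"
  proof (rule directed_hausdorff_support_density_ge)
    show "prob_space (density ?P (RN_deriv ?P \<pi>))"
      using \<pi>(1) density_eq by simp
    show "(\<integral>\<^sup>+ z. (RN_deriv ?P \<pi> z)\<^sup>2 \<partial>?P) \<le> ennreal E"
      using energy(3) E by (meson ennreal_leI order_trans)
  qed (use sets_pair_measure_borel[OF \<mu>(2) \<nu>(2)] \<open>0 \<le> E\<close> nbhd in auto)
  then show ?thesis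
    unfolding density_eq .
qed

lemma powr_inverse_energy_scaling:
  fixes C V \<epsilon> d :: real
  assumes "0 < C" "0 < V" "0 < \<epsilon>" "0 < d"
  shows "(1 / (C * (2 / \<epsilon> * (V * \<epsilon> powr (2 / (2 + d)))))) powr (1 / d)
           = (1 / (2 * C * V)) powr (1 / d) * \<epsilon> powr (1 / (2 + d))"
proof -
  have "\<epsilon> / \<epsilon> powr (2 / (2 + d)) = \<epsilon> powr (1 - 2 / (2 + d))"
    using assms by (simp add: powr_diff)
  also have "1 - 2 / (2 + d) = d / (2 + d)"
    using assms by (simp add: field_simps)
  finally have "1 / (C * (2 / \<epsilon> * (V * \<epsilon> powr (2 / (2 + d)))))
      = 1 / (2 * C * V) * \<epsilon> powr (d / (2 + d))"
    using assms by (simp add: field_simps)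
  moreover have "(1 / (2 * C * V) * \<epsilon> powr (d / (2 + d))) powr (1 / d)
      = (1 / (2 * C * V)) powr (1 / d) * (\<epsilon> powr (d / (2 + d))) powr (1 / d)"
    using assms by (intro powr_mult; simp)
  moreover have "(\<epsilon> powr (d / (2 + d))) powr (1 / d) = \<epsilon> powr (1 / (2 + d))"
    using assms by (simp add: powr_powr)
  ultimately show ?thesis
    by simp
qed

lemma directed_hausdorff_qot_support_ge_small_eps:
  fixes \<mu> \<nu> :: "'a::euclidean_space measure"
  assumes \<mu>: "prob_space \<mu>" "sets \<mu> = sets borel" and \<nu>: "prob_space \<nu>" "sets \<nu> = sets borel"
    and cost: "transport_cost (\<mu> \<Otimes>\<^sub>M \<nu>) < \<top>" and \<epsilon>: "0 < \<epsilon>" and opt: "qot_optimizer \<epsilon> \<mu> \<nu> \<pi>"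
    and nbhd: "\<And>r. 0 \<le> r \<Longrightarrow> emeasure (\<mu> \<Otimes>\<^sub>M \<nu>) {z. infdist z G \<le> r} \<le> ennreal (C * r ^ DIM('a))"
    and "0 < C" "0 < V"
    and gap: "QOT_value \<epsilon> \<mu> \<nu> - OT_value \<mu> \<nu> \<le> V * \<epsilon> powr (2 / (2 + DIM('a)))"
  shows "ereal ((1 / (2 * C * V)) powr (1 / DIM('a)) * \<epsilon> powr (1 / (2 + DIM('a))))
           \<le> directed_hausdorff (measure_support \<pi>) G"
proof -
  have "2 / \<epsilon> * (QOT_value \<epsilon> \<mu> \<nu> - OT_value \<mu> \<nu>) \<le> 2 / \<epsilon> * (V * \<epsilon> powr (2 / (2 + DIM('a))))"
    using gap \<epsilon> by (intro mult_left_mono) auto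
  from directed_hausdorff_qot_support_ge[OF \<mu> \<nu> cost \<epsilon> opt nbhd this] show ?thesis
    using powr_inverse_energy_scaling[OF \<open>0 < C\<close> \<open>0 < V\<close> \<epsilon>, of "DIM('a)"] by simp
qed

lemma directed_hausdorff_qot_support_ge_large_eps:
  fixes \<mu> \<nu> :: "'a::euclidean_space measure"
  assumes \<mu>: "prob_space \<mu>" "sets \<mu> = sets borel" and \<nu>: "prob_space \<nu>" "sets \<nu> = sets borel"
    and cost: "transport_cost (\<mu> \<Otimes>\<^sub>M \<nu>) < \<top>" and \<epsilon>: "1 \<le> \<epsilon>" and opt: "qot_optimizer \<epsilon> \<mu> \<nu> \<pi>"
    and nbhd: "\<And>r. 0 \<le> r \<Longrightarrow> emeasure (\<mu> \<Otimes>\<^sub>M \<nu>) {z. infdist z G \<le> r} \<le> ennreal (C * r ^ DIM('a))"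
  defines "K \<equiv> (\<integral>z. qcost z \<partial>(\<mu> \<Otimes>\<^sub>M \<nu>)) - OT_value \<mu> \<nu> + 1 / 2"
  shows "ereal ((1 / (2 * C * K)) powr (1 / DIM('a))) \<le> directed_hausdorff (measure_support \<pi>) G"
proof -
  have integral_eq: "(\<integral>z. qcost z \<partial>(\<mu> \<Otimes>\<^sub>M \<nu>)) = enn2real (transport_cost (\<mu> \<Otimes>\<^sub>M \<nu>))"
    by (rule integral_qcost_eq_transport_cost[OF sets_pair_measure_borel[OF \<mu>(2) \<nu>(2)]])
  have "1 / 2 \<le> K"
    using OT_value_le_integral_qcost_pair_measure[OF \<mu> \<nu> cost] unfolding K_def by simp
  have "QOT_value \<epsilon> \<mu> \<nu> - OT_value \<mu> \<nu> \<le> (K - 1 / 2) + \<epsilon> / 2"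
    using QOT_value_le_pair_measure[OF \<mu> \<nu> cost] \<epsilon> unfolding K_def integral_eq by simp
  then have "2 / \<epsilon> * (QOT_value \<epsilon> \<mu> \<nu> - OT_value \<mu> \<nu>) \<le> 2 / \<epsilon> * ((K - 1 / 2) + \<epsilon> / 2)"
    using \<epsilon> by (intro mult_left_mono) auto
  also have "\<dots> = (2 * K - 1) / \<epsilon> + 1"
    using \<epsilon> by (simp add: field_simps)
  also have "\<dots> \<le> (2 * K - 1) + 1"
    using divide_left_mono[of 1 \<epsilon> "2 * K - 1"] \<epsilon> \<open>1 / 2 \<le> K\<close> by simp
  finally have "2 / \<epsilon> * (QOT_value \<epsilon> \<mu> \<nu> - OT_value \<mu> \<nu>) \<le> 2 * K"
    by simp
  from directed_hausdorff_qot_support_ge[OF \<mu> \<nu> cost _ opt nbhd this] \<epsilon> show ?thesis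
    by (simp add: mult_ac)
qed

theorem theorem3p6:
  fixes \<mu> \<nu> :: "'a::euclidean_space measure"
    and \<Omega> :: "'a set" and \<rho> :: "'a \<Rightarrow> real"
    and lmu_lo lmu_hi lnu L Cval :: real
    and \<phi> :: "'a \<Rightarrow> real" and T :: "'a \<Rightarrow> 'a"
  defines "d \<equiv> real DIM('a)"
  defines "C0 \<equiv> lnu * (1 + L\<^sup>2) powr (d / 2) * unit_ball_volume DIM('a)"
  defines "Clin \<equiv> (\<integral>z. qcost z \<partial>(\<mu> \<Otimes>\<^sub>M \<nu>)) - OT_value \<mu> \<nu> + 1 / 2"
  defines "csm \<equiv> (1 / (2 * C0 * Cval)) powr (1 / d)"
  defines "clg \<equiv> (1 / (2 * C0 * Clin)) powr (1 / d)"
  assumes \<Omega>_bounded: "bounded \<Omega>" and \<Omega>_connected: "connected \<Omega>"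
    and \<Omega>_lip: "lipschitz_domain \<Omega>" and \<Omega>_ball: "\<Omega> \<subseteq> ball 0 1"
    and \<rho>_meas: "\<rho> \<in> borel_measurable lborel"
    and \<mu>_def: "\<mu> = density lborel (\<lambda>x. ennreal (\<rho> x) * indicator \<Omega> x)"
    and \<mu>_prob: "prob_space \<mu>"
    and lmu: "0 < lmu_lo" "AE x in lborel. x \<in> \<Omega> \<longrightarrow> lmu_lo \<le> \<rho> x \<and> \<rho> x \<le> lmu_hi"
    and \<nu>_prob: "prob_space \<nu>" and \<nu>_sets: "sets \<nu> = sets borel"
    and \<nu>_density: "\<exists>f \<in> borel_measurable lborel. \<nu> = density lborel f \<and>
                      (\<forall>y\<in>measure_support \<nu>. f y \<le> ennreal lnu)"
    and \<nu>_spt: "measure_support \<nu> \<subseteq> ball 0 1"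
    and brenier_convex: "convex_on UNIV \<phi>"
    and brenier_grad: "\<And>x. (\<phi> has_derivative (\<lambda>h. T x \<bullet> h)) (at x)"
    and brenier_push: "distr \<mu> borel T = \<nu>"
    and T_lip: "L-lipschitz_on UNIV T"
    and Cval: "1 \<le> Cval"
    and gap: "\<And>\<epsilon>. 0 < \<epsilon> \<Longrightarrow> \<epsilon> \<le> 1 \<Longrightarrow>
               (1 / Cval) * \<epsilon> powr (2 / (2 + d)) \<le> QOT_value \<epsilon> \<mu> \<nu> - OT_value \<mu> \<nu> \<and>
               QOT_value \<epsilon> \<mu> \<nu> - OT_value \<mu> \<nu> \<le> Cval * \<epsilon> powr (2 / (2 + d))"
  shows "0 < clg \<and>
    (\<forall>\<epsilon> \<pi>. 0 < \<epsilon> \<and> qot_optimizer \<epsilon> \<mu> \<nu> \<pi> \<longrightarrow>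
       (\<epsilon> \<le> 1 \<longrightarrow> ereal (csm * \<epsilon> powr (1 / (2 + d)))
                      \<le> directed_hausdorff (measure_support \<pi>) (graph_of T)) \<and>
       (1 \<le> \<epsilon> \<longrightarrow> ereal clg \<le> directed_hausdorff (measure_support \<pi>) (graph_of T)) \<and>
       ereal (min (csm * \<epsilon> powr (1 / (2 + d))) clg)
          \<le> directed_hausdorff (measure_support \<pi>) (graph_of T))"
proof -
  have \<mu>: "prob_space \<mu>" "sets \<mu> = sets borel" and \<nu>: "prob_space \<nu>" "sets \<nu> = sets borel"
    using \<mu>_prob \<mu>_def \<nu>_prob \<nu>_sets by auto
  have \<nu>_le: "\<And>B. B \<in> sets borel \<Longrightarrow> emeasure \<nu> B \<le> ennreal lnu * emeasure lborel B"
    using \<nu>_density emeasure_le_lborel_if_density_bounded_on_support[OF \<nu>_sets] by blast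
  have "AE x in \<mu>. norm x \<le> 1"
    using AE_density_indicator[of "\<lambda>x. ennreal (\<rho> x)" \<Omega>] \<rho>_meas \<Omega>_lip \<Omega>_ball
    unfolding \<mu>_def lipschitz_domain_def by (force elim!: AE_mp)
  moreover have "AE y in \<nu>. norm y \<le> 1"
    using AE_in_measure_support[OF \<nu>_sets] \<nu>_spt by (force elim!: AE_mp)
  ultimately have cost: "transport_cost (\<mu> \<Otimes>\<^sub>M \<nu>) < \<top>"
    using transport_cost_pair_measure_le[OF \<mu>(1) _ \<nu>(1) _ \<mu>(2) \<nu>(2), of 1]
    by (simp add: ennreal_less_top order.strict_trans1)
  have nbhd: "\<And>r. 0 \<le> r \<Longrightarrow> emeasure (\<mu> \<Otimes>\<^sub>M \<nu>) {z. infdist z (graph_of T) \<le> r} \<le> ennreal (C0 * r ^ DIM('a))"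
    unfolding C0_def d_def by (rule emeasure_graph_neighbourhood_le[OF \<mu> \<nu> \<nu>_le T_lip])
  have "0 < C0"
    using density_bound_pos[OF \<nu> \<nu>_le] unfolding C0_def unit_ball_volume_eq
    by (intro mult_pos_pos) (auto simp: add_nonneg_eq_0_iff)
  have "1 / 2 \<le> Clin"
    using OT_value_le_integral_qcost_pair_measure[OF \<mu> \<nu> cost] unfolding Clin_def by simp
  have small: "ereal (csm * \<epsilon> powr (1 / (2 + d))) \<le> directed_hausdorff (measure_support \<pi>) (graph_of T)"
    if "0 < \<epsilon>" "\<epsilon> \<le> 1" "qot_optimizer \<epsilon> \<mu> \<nu> \<pi>" for \<epsilon> \<pi>
    using directed_hausdorff_qot_support_ge_small_eps[OF \<mu> \<nu> cost that(1,3) nbhd \<open>0 < C0\<close>, of Cval]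
      gap[OF that(1,2)] Cval unfolding csm_def d_def by simp
  have large: "ereal clg \<le> directed_hausdorff (measure_support \<pi>) (graph_of T)"
    if "1 \<le> \<epsilon>" "qot_optimizer \<epsilon> \<mu> \<nu> \<pi>" for \<epsilon> \<pi>
    using directed_hausdorff_qot_support_ge_large_eps[OF \<mu> \<nu> cost that nbhd]
    unfolding clg_def Clin_def d_def by simp
  have "ereal (min (csm * \<epsilon> powr (1 / (2 + d))) clg) \<le> directed_hausdorff (measure_support \<pi>) (graph_of T)"
    if "0 < \<epsilon>" "qot_optimizer \<epsilon> \<mu> \<nu> \<pi>" for \<epsilon> \<pi>
    using small[OF that(1) _ that(2)] large[OF _ that(2)]
    by (cases "\<epsilon> \<le> 1") (auto intro: order_trans[rotated])
  moreover have "0 < clg"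
    unfolding clg_def using \<open>0 < C0\<close> \<open>1 / 2 \<le> Clin\<close> by simp
  ultimately show ?thesis
    using small large by blast
qed

end
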